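(* Let $m>1$, $d\ge 2$ and $t$ be integers with $\gcd(d,m)=1$ and $\gcd(d,t)=1$, and let $a$ be an indeterminate. Then \[ \sum_{k=0}^{m-1}[2dk+t]_{q^2}[2dk+t]^2\frac{(q^{2t};q^{2d})_k^2(aq^{2t};q^{2d})_k(q^{2t}/a;q^{2d})_k}{(q^{2d};q^{2d})_k^2(aq^{2d};q^{2d})_k(q^{2d}/a;q^{2d})_k}q^{-4tk}\equiv 0\pmod{\Phi_m(q^2)}. \]
   Context: For an indeterminate $q$, $(x;q)_k=(1-x)(1-xq)\cdots(1-xq^{k-1})$ (with $(x;q)_0=1$). For any integer $j$, $[j]=(1-q^j)/(1-q)$ and $[j]_{q^2}=(1-q^{2j})/(1-q^2)$. $\Phi_m(x)$ is the $m$-th cyclotomic polynomial, evaluated here at $x=q^2$. A congruence $A\equiv B\pmod{\Phi_m(q^2)}$ between rational functions in $q$ and $a$ means that $A-B$, written as a quotient of polynomials with denominator coprime to $\Phi_m(q^2)$, has numerator divisible by $\Phi_m(q^2)$. *)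

theory Defs
  imports "HOL-Computational_Algebra.Polynomial" "HOL-Computational_Algebra.Fraction_Field"
begin

(* The m-th cyclotomic polynomial over Q, via x^m - 1 = prod_{d | m} Phi_d(x);
   convention Phi_0 = 1 (never used). *)
function cyclotomic :: "nat \<Rightarrow> rat poly" where
  "cyclotomic n = (if n = 0 then 1 else
      (monom 1 n - 1) div prod_list (map cyclotomic (filter (\<lambda>e. e dvd n) [1..<n])))"
  by pat_completeness auto
termination by (relation "measure id") auto

(* Coefficient field K = Q(a); polynomial ring R = K[q]; rational functions F = Q(a)(q) *)
type_synonym KF = "rat poly fract"
type_synonym RP = "KF poly"
type_synonym RF = "RP fract"

definition var_a :: RF where "var_a = Fract [: Fract [:0, 1:] 1 :] 1"
definition var_q :: RF where "var_q = Fract [:0, 1:] 1"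

definition cyclo_q2 :: "nat \<Rightarrow> RP" where
  "cyclo_q2 m = pcompose (map_poly (\<lambda>c. Fract [:c:] 1) (cyclotomic m)) [:0, 0, 1:]"

definition qpoch :: "RF \<Rightarrow> RF \<Rightarrow> nat \<Rightarrow> RF" where
  "qpoch x p k = (\<Prod>i<k. 1 - x * p ^ i)"

definition qint :: "int \<Rightarrow> RF" where
  "qint j = (1 - var_q powi j) / (1 - var_q)"

definition qint2 :: "int \<Rightarrow> RF" where
  "qint2 j = (1 - var_q powi (2 * j)) / (1 - var_q ^ 2)"

definition cong0_mod :: "RF \<Rightarrow> RP \<Rightarrow> bool" where
  "cong0_mod A f \<longleftrightarrow> (\<exists>P Q. Q \<noteq> 0 \<and> coprime Q f \<and> f dvd P \<and> A = Fract P Q)"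

end

theory Submission
  imports Defs "HOL-Computational_Algebra.Polynomial_Factorial" "HOL-Computational_Algebra.Field_as_Ring"
begin

(* Let p = q^(2d). As d is invertible modulo m, there is n < m with m | t + d n; since
   \<Phi>_m(q^2) divides q^(2m) - 1, this gives q^(2t) \<equiv> p^(-n). All denominators are invertible
   modulo \<Phi>_m(q^2): 1 - p^j for 0 < j < m because m does not divide d j, and 1 - a^(\<plusminus>1) q^(2j)
   because a^m \<noteq> 1. For n < k < m the factor 1 - q^(2t) p^n \<equiv> 0 occurs in (q^(2t); p)_k.
   For k \<le> n, write the Pochhammer quotient through h(x) = (1-x)^2 (1-ax) (1-x/a); with
   h(1/x) = x^(-4) h(x) the k-th term becomes a factor symmetric under k \<mapsto> n - k times one
   that changes sign, so the terms k and n - k cancel and twice the sum over k \<le> n vanishes. *)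

section \<open>Cyclotomic polynomials\<close>

lemma power_minus_one_dvd_power_minus_one:
  fixes x :: "'a::comm_ring_1"
  assumes "a dvd b"
  shows "x ^ a - 1 dvd x ^ b - 1"
proof -
  obtain c where "b = a * c" using assms by blast
  then have "x ^ b - 1 = (x ^ a - 1) * (\<Sum>i<c. (x ^ a) ^ i)"
    by (simp add: power_mult power_diff_1_eq)
  then show ?thesis by simp
qed

lemma dvd_power_gcd_minus_one:
  fixes x h :: "'a::comm_ring_1"
  assumes "h dvd x ^ a - 1" and "h dvd x ^ b - 1" and "a > 0"
  shows "h dvd x ^ gcd a b - 1"
proof -
  obtain u v where uv: "a * u = b * v + gcd a b"
    using bezout_nat[of a b] assms(3) by auto
  have "h dvd x ^ (a * u) - 1"
    using assms(1) power_minus_one_dvd_power_minus_one[of a "a * u" x] by (simp add: dvd_trans)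
  moreover have "h dvd x ^ (b * v) - 1"
    using assms(2) power_minus_one_dvd_power_minus_one[of b "b * v" x] by (simp add: dvd_trans)
  moreover have "x ^ gcd a b - 1 = (x ^ (a * u) - 1) - x ^ gcd a b * (x ^ (b * v) - 1)"
    by (simp add: uv power_add algebra_simps)
  ultimately show ?thesis by (metis dvd_diff dvd_mult)
qed

lemma X_power_minus_one_squarefree:
  fixes h :: "'a::field_char_0 poly"
  assumes "h * h dvd [:0, 1:] ^ n - 1" and "n > 0"
  shows "is_unit h"
proof -
  let ?E = "[:0, 1:] ^ n - 1 :: 'a poly"
  obtain c where c: "?E = h * h * c" using assms(1) by blast
  have "pderiv ?E = h * (h * pderiv c + 2 * c * pderiv h)"
    unfolding c by (simp add: pderiv_mult algebra_simps)
  then have "h dvd pderiv ?E" by simp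
  moreover have "h dvd ?E" unfolding c by (simp add: mult.assoc)
  ultimately have "h dvd [:0, 1:] * pderiv ?E - smult (of_nat n) ?E"
    by (rule dvd_diff[OF dvd_mult dvd_smult])
  also have "[:0, 1:] * pderiv ?E - smult (of_nat n) ?E = [:of_nat n:]"
  proof -
    have "[:0, 1:] * pderiv ?E = smult (of_nat n) ([:0, 1:] ^ n)"
    proof -
      have "pderiv ?E = smult (of_nat n) ([:0, 1:] ^ (n - 1))"
        by (simp add: pderiv_diff pderiv_power pderiv_pCons)
      then have "[:0, 1:] * pderiv ?E = smult (of_nat n) ([:0, 1:] ^ Suc (n - 1))"
        by (simp only: mult_smult_right power_Suc)
      then show ?thesis using assms(2) by simp
    qed
    then show ?thesis by (simp add: smult_diff_right)
  qed
  finally have "h dvd [:of_nat n:]" .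
  moreover have "is_unit [:(of_nat n :: 'a):]"
    using assms(2) by (simp add: is_unit_const_poly_iff dvd_field_iff)
  ultimately show ?thesis by (rule dvd_unit_imp_unit)
qed

lemma pairwise_coprime_prod_dvd:
  fixes f :: "'b \<Rightarrow> 'a::semiring_gcd"
  assumes "finite A" and "\<And>i. i \<in> A \<Longrightarrow> f i dvd x"
    and "\<And>i j. i \<in> A \<Longrightarrow> j \<in> A \<Longrightarrow> i \<noteq> j \<Longrightarrow> coprime (f i) (f j)"
  shows "prod f A dvd x"
  using assms
proof (induction A rule: finite_induct)
  case (insert i A)
  then have "coprime (f i) (prod f A)" by (blast intro: prod_coprime_right)
  with insert show ?case by (simp add: divides_mult)
qed simp

lemma prod_divisors_eq:
  fixes e :: nat
  assumes "e > 0"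
  shows "prod f {h. h dvd e} = f e * prod f {h. h dvd e \<and> h < e}"
proof -
  have "{h. h dvd e} = insert e {h. h dvd e \<and> h < e}"
    using dvd_imp_le[of _ e] assms by fastforce
  then show ?thesis by simp
qed

declare cyclotomic.simps [simp del]

lemma cyclotomic_eq_div:
  assumes "n > 0"
  shows "cyclotomic n = ([:0, 1:] ^ n - 1) div prod cyclotomic {e. e dvd n \<and> e < n}"
proof -
  have "set (filter (\<lambda>e. e dvd n) [1..<n]) = {e. e dvd n \<and> e < n}"
    using assms by (auto intro: Nat.gr0I)
  moreover have "prod cyclotomic (set (filter (\<lambda>e. e dvd n) [1..<n])) =
      prod_list (map cyclotomic (filter (\<lambda>e. e dvd n) [1..<n]))"
    by (rule prod.distinct_set_conv_list) simp
  ultimately show ?thesis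
    using cyclotomic.simps[of n] assms by (simp add: monom_altdef)
qed

text \<open>The product formula is assumed only up to \<open>e\<close>, so that this serves inside the induction
  proving it. A common factor of \<open>\<Phi>\<^sub>e\<close> and \<open>X\<^sup>j - 1\<close> divides \<open>X\<^sup>g - 1\<close> for
  \<open>g = gcd e j < e\<close>; as \<open>\<Phi>\<^sub>e (X\<^sup>g - 1)\<close> divides \<open>X\<^sup>e - 1\<close>, its square divides the
  squarefree \<open>X\<^sup>e - 1\<close>.\<close>

lemma coprime_cyclotomic_if_prod_formula:
  assumes prod_formula: "\<And>e'. 0 < e' \<Longrightarrow> e' \<le> e \<Longrightarrow> prod cyclotomic {h. h dvd e'} = [:0, 1:] ^ e' - 1"
    and "e > 0" and "j > 0" and "\<not> e dvd j"
  shows "coprime (cyclotomic e) ([:0, 1:] ^ j - 1)"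
proof (rule coprimeI)
  fix c assume c_cyc: "c dvd cyclotomic e" and c_j: "c dvd [:0, 1:] ^ j - 1"
  define g where "g = gcd e j"
  have "g > 0" "g dvd e" using \<open>e > 0\<close> by (simp_all add: g_def)
  moreover have "g \<noteq> e" using assms(4) by (metis g_def gcd_dvd2)
  ultimately have "g < e" using dvd_imp_le[of g e] \<open>e > 0\<close> by simp
  have "[:0, 1:] ^ e - 1 = prod cyclotomic {h. h dvd e}"
    using prod_formula[of e] \<open>e > 0\<close> by simp
  also have "\<dots> = cyclotomic e * prod cyclotomic {h. h dvd e \<and> h < e}"
    using \<open>e > 0\<close> by (rule prod_divisors_eq)
  finally have E: "[:0, 1:] ^ e - 1 = cyclotomic e * prod cyclotomic {h. h dvd e \<and> h < e}" .
  have "[:0, 1:] ^ g - 1 = prod cyclotomic {h. h dvd g}"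
    using prod_formula[of g] \<open>g > 0\<close> \<open>g < e\<close> by simp
  also have "\<dots> dvd prod cyclotomic {h. h dvd e \<and> h < e}"
  proof (rule prod_dvd_prod_subset)
    show "{h. h dvd g} \<subseteq> {h. h dvd e \<and> h < e}"
      using \<open>g dvd e\<close> \<open>g < e\<close> dvd_imp_le[OF _ \<open>g > 0\<close>] dvd_trans[of _ g e] by fastforce
  qed simp
  finally have "cyclotomic e * ([:0, 1:] ^ g - 1) dvd [:0, 1:] ^ e - 1"
    unfolding E by (rule mult_dvd_mono[OF dvd_refl])
  moreover have "c dvd [:0, 1:] ^ e - 1"
    unfolding E using c_cyc by (rule dvd_mult2)
  then have "c dvd [:0, 1:] ^ g - 1"
    unfolding g_def using c_j \<open>e > 0\<close> by (rule dvd_power_gcd_minus_one)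
  then have "c * c dvd cyclotomic e * ([:0, 1:] ^ g - 1)"
    using c_cyc by (rule mult_dvd_mono[rotated])
  ultimately have "c * c dvd [:0, 1:] ^ e - 1"
    by (rule dvd_trans[rotated])
  then show "is_unit c" using X_power_minus_one_squarefree \<open>e > 0\<close> by blast
qed

lemma prod_cyclotomic_divisors:
  "n > 0 \<Longrightarrow> prod cyclotomic {e. e dvd n} = [:0, 1:] ^ n - 1"
proof (induction n rule: less_induct)
  case (less n)
  define D where "D = {e. e dvd n \<and> e < n}"
  have D: "0 < e" "e < n" "e dvd n" if "e \<in> D" for e
    using that less.prems by (auto simp: D_def intro: Nat.gr0I)
  have cyc_dvd: "cyclotomic e dvd [:0, 1:] ^ e - 1" if "e \<in> D" for e
  proof -
    have "[:0, 1:] ^ e - 1 = prod cyclotomic {h. h dvd e}"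
      using less.IH[OF D(2)[OF that] D(1)[OF that]] by simp
    also have "\<dots> = cyclotomic e * prod cyclotomic {h. h dvd e \<and> h < e}"
      using D(1)[OF that] by (rule prod_divisors_eq)
    finally show ?thesis by simp
  qed
  have coprime_D: "coprime (cyclotomic e) ([:0, 1:] ^ j - 1)"
    if "e \<in> D" "j > 0" "\<not> e dvd j" for e j
  proof (rule coprime_cyclotomic_if_prod_formula)
    show "prod cyclotomic {h. h dvd e'} = [:0, 1:] ^ e' - 1" if "0 < e'" "e' \<le> e" for e'
      using that D(2)[OF \<open>e \<in> D\<close>] by (intro less.IH) simp_all
  qed (use that D(1)[OF that(1)] in simp_all)
  have "prod cyclotomic D dvd [:0, 1:] ^ n - 1"
  proof (rule pairwise_coprime_prod_dvd)
    show "finite D" by (simp add: D_def)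
    show "cyclotomic e dvd [:0, 1:] ^ n - 1" if "e \<in> D" for e
      using cyc_dvd[OF that] power_minus_one_dvd_power_minus_one[OF D(3)[OF that]]
      by (rule dvd_trans)
    show "coprime (cyclotomic e) (cyclotomic e')" if "e \<in> D" "e' \<in> D" "e \<noteq> e'" for e e'
    proof (cases "e dvd e'")
      case False
      show ?thesis
        by (rule coprime_divisors[OF dvd_refl cyc_dvd[OF that(2)] coprime_D[OF that(1) D(1)[OF that(2)] False]])
    next
      case True
      then have "\<not> e' dvd e" using that(3) dvd_antisym by blast
      then have "coprime (cyclotomic e') (cyclotomic e)"
        by (rule coprime_divisors[OF dvd_refl cyc_dvd[OF that(1)] coprime_D[OF that(2) D(1)[OF that(1)]]])
      then show ?thesis by (simp add: coprime_commute)
    qed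
  qed
  then have "cyclotomic n * prod cyclotomic D = [:0, 1:] ^ n - 1"
    using cyclotomic_eq_div[OF less.prems] by (simp add: D_def)
  then show ?case using prod_divisors_eq[OF less.prems, of cyclotomic] by (simp add: D_def)
qed

lemma cyclotomic_dvd_X_power_minus_one:
  assumes "n > 0"
  shows "cyclotomic n dvd [:0, 1:] ^ n - 1"
proof (rule dvdI)
  show "[:0, 1:] ^ n - 1 = cyclotomic n * prod cyclotomic {e. e dvd n \<and> e < n}"
    using prod_cyclotomic_divisors[OF assms] prod_divisors_eq[OF assms, of cyclotomic] by simp
qed

lemma coprime_cyclotomic_X_power_minus_one:
  "n > 0 \<Longrightarrow> j > 0 \<Longrightarrow> \<not> n dvd j \<Longrightarrow> coprime (cyclotomic n) ([:0, 1:] ^ j - 1)"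
  by (rule coprime_cyclotomic_if_prod_formula) (simp_all add: prod_cyclotomic_divisors)

section \<open>Fractions integral at a modulus\<close>

text \<open>Denominators are required to be invertible modulo \<open>f\<close> rather than coprime to it:
  invertibility is evidently multiplicative, whereas coprimality on \<open>RP\<close> has no gcd theory
  behind it, \<open>fract\<close> having no \<open>factorial_ring_gcd\<close> instance.\<close>

definition invertible_mod :: "'a::comm_ring_1 \<Rightarrow> 'a \<Rightarrow> bool" where
  "invertible_mod f x \<longleftrightarrow> (\<exists>u. f dvd x * u - 1)"

lemma invertible_mod_1: "invertible_mod f 1"
  unfolding invertible_mod_def by (rule exI[of _ 1]) simp

lemma invertible_mod_mult:
  assumes "invertible_mod f x" and "invertible_mod f y"
  shows "invertible_mod f (x * y)"
proof -
  obtain u w where "f dvd x * u - 1" "f dvd y * w - 1"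
    using assms unfolding invertible_mod_def by blast
  then have "f dvd (x * u - 1) * (y * w) + (y * w - 1)" by (intro dvd_add dvd_mult2)
  also have "(x * u - 1) * (y * w) + (y * w - 1) = x * y * (u * w) - 1"
    by (simp add: algebra_simps)
  finally have "f dvd x * y * (u * w) - 1" .
  then show ?thesis unfolding invertible_mod_def by blast
qed

lemma invertible_mod_if_dvd_minus_unit:
  assumes "f dvd x * y - c" and "is_unit c"
  shows "invertible_mod f x"
proof -
  obtain c' where c': "1 = c * c'" using assms(2) by (rule dvdE)
  have "x * (y * c') - 1 = (x * y - c) * c'" by (simp add: c' algebra_simps)
  then have "f dvd x * (y * c') - 1" using assms(1) by simp
  then show ?thesis unfolding invertible_mod_def by blast
qed

lemma invertible_mod_factor: "invertible_mod f (x * y) \<Longrightarrow> invertible_mod f x"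
  unfolding invertible_mod_def by (metis mult.assoc)

lemma coprime_if_invertible_mod:
  assumes "invertible_mod f x"
  shows "coprime x f"
proof (rule coprimeI)
  obtain u where u: "f dvd x * u - 1" using assms unfolding invertible_mod_def by blast
  fix c assume "c dvd x" "c dvd f"
  then have "c dvd x * u - (x * u - 1)" using u by (blast intro: dvd_diff dvd_mult2 dvd_trans)
  then show "is_unit c" by simp
qed

definition integral_mod :: "'a::idom \<Rightarrow> 'a fract \<Rightarrow> bool" where
  "integral_mod f A \<longleftrightarrow> (\<exists>P Q. Q \<noteq> 0 \<and> invertible_mod f Q \<and> A = Fract P Q)"

definition unit_mod :: "'a::idom \<Rightarrow> 'a fract \<Rightarrow> bool" where
  "unit_mod f A \<longleftrightarrow>
     (\<exists>P Q. P \<noteq> 0 \<and> Q \<noteq> 0 \<and> invertible_mod f P \<and> invertible_mod f Q \<and> A = Fract P Q)"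

definition zero_mod :: "'a::idom \<Rightarrow> 'a fract \<Rightarrow> bool" where
  "zero_mod f A \<longleftrightarrow> (\<exists>P Q. Q \<noteq> 0 \<and> invertible_mod f Q \<and> f dvd P \<and> A = Fract P Q)"

definition cong_mod :: "'a::idom \<Rightarrow> 'a fract \<Rightarrow> 'a fract \<Rightarrow> bool" where
  "cong_mod f A B \<longleftrightarrow> zero_mod f (A - B)"

lemma integral_mod_Fract_1: "integral_mod f (Fract P 1)"
  unfolding integral_mod_def by (intro exI[of _ P] exI[of _ 1]) (simp add: invertible_mod_1)

lemma integral_mod_1: "integral_mod f 1"
  using integral_mod_Fract_1[of f 1] by (simp add: One_fract_def)

lemma integral_mod_add:
  assumes "integral_mod f A" and "integral_mod f B"
  shows "integral_mod f (A + B)"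
proof -
  obtain P Q P' Q' where "Q \<noteq> 0" "invertible_mod f Q" "A = Fract P Q"
    and "Q' \<noteq> 0" "invertible_mod f Q'" "B = Fract P' Q'"
    using assms unfolding integral_mod_def by blast
  then show ?thesis
    unfolding integral_mod_def
    by (intro exI[of _ "P * Q' + P' * Q"] exI[of _ "Q * Q'"]) (simp add: invertible_mod_mult)
qed

lemma integral_mod_mult:
  assumes "integral_mod f A" and "integral_mod f B"
  shows "integral_mod f (A * B)"
proof -
  obtain P Q P' Q' where "Q \<noteq> 0" "invertible_mod f Q" "A = Fract P Q"
    and "Q' \<noteq> 0" "invertible_mod f Q'" "B = Fract P' Q'"
    using assms unfolding integral_mod_def by blast
  then show ?thesis
    unfolding integral_mod_def
    by (intro exI[of _ "P * P'"] exI[of _ "Q * Q'"]) (simp add: invertible_mod_mult)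
qed

lemma integral_mod_uminus:
  assumes "integral_mod f A"
  shows "integral_mod f (- A)"
proof -
  obtain P Q where "Q \<noteq> 0" "invertible_mod f Q" "A = Fract P Q"
    using assms unfolding integral_mod_def by blast
  then show ?thesis unfolding integral_mod_def by (intro exI[of _ "- P"] exI[of _ Q]) simp
qed

lemma integral_mod_diff: "integral_mod f A \<Longrightarrow> integral_mod f B \<Longrightarrow> integral_mod f (A - B)"
  using integral_mod_add[of f A "- B"] integral_mod_uminus[of f B] by simp

lemma integral_mod_power: "integral_mod f A \<Longrightarrow> integral_mod f (A ^ n)"
  by (induction n) (simp_all add: integral_mod_1 integral_mod_mult)

lemma integral_mod_prod: "(\<And>i. i \<in> I \<Longrightarrow> integral_mod f (g i)) \<Longrightarrow> integral_mod f (prod g I)"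
  by (induction I rule: infinite_finite_induct) (simp_all add: integral_mod_1 integral_mod_mult)

lemma unit_mod_Fract_1: "P \<noteq> 0 \<Longrightarrow> invertible_mod f P \<Longrightarrow> unit_mod f (Fract P 1)"
  unfolding unit_mod_def by (intro exI[of _ P] exI[of _ 1]) (simp add: invertible_mod_1)

lemma unit_mod_imp_integral_mod: "unit_mod f A \<Longrightarrow> integral_mod f A"
  unfolding unit_mod_def integral_mod_def by blast

lemma unit_mod_nonzero: "unit_mod f A \<Longrightarrow> A \<noteq> 0"
  unfolding unit_mod_def by (auto simp: eq_fract Zero_fract_def)

lemma unit_mod_1: "unit_mod f 1"
  using unit_mod_Fract_1[of 1 f] by (simp add: One_fract_def invertible_mod_1)

lemma unit_mod_inverse:
  assumes "unit_mod f A"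
  shows "unit_mod f (inverse A)"
proof -
  obtain P Q where "P \<noteq> 0" "Q \<noteq> 0" "invertible_mod f P" "invertible_mod f Q" "A = Fract P Q"
    using assms unfolding unit_mod_def by blast
  then show ?thesis unfolding unit_mod_def by (intro exI[of _ Q] exI[of _ P]) simp
qed

lemma unit_mod_mult:
  assumes "unit_mod f A" and "unit_mod f B"
  shows "unit_mod f (A * B)"
proof -
  obtain P Q P' Q' where "P \<noteq> 0" "Q \<noteq> 0" "invertible_mod f P" "invertible_mod f Q" "A = Fract P Q"
    and "P' \<noteq> 0" "Q' \<noteq> 0" "invertible_mod f P'" "invertible_mod f Q'" "B = Fract P' Q'"
    using assms unfolding unit_mod_def by blast
  then show ?thesis
    unfolding unit_mod_def
    by (intro exI[of _ "P * P'"] exI[of _ "Q * Q'"]) (simp add: invertible_mod_mult)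
qed

lemma unit_mod_divide: "unit_mod f A \<Longrightarrow> unit_mod f B \<Longrightarrow> unit_mod f (A / B)"
  by (simp add: divide_inverse unit_mod_mult unit_mod_inverse)

lemma unit_mod_power: "unit_mod f A \<Longrightarrow> unit_mod f (A ^ n)"
  by (induction n) (simp_all add: unit_mod_1 unit_mod_mult)

lemma unit_mod_power_int: "unit_mod f A \<Longrightarrow> unit_mod f (A powi e)"
  by (cases "e \<ge> 0") (auto simp: power_int_def unit_mod_power unit_mod_inverse)

lemma unit_mod_prod: "(\<And>i. i \<in> I \<Longrightarrow> unit_mod f (g i)) \<Longrightarrow> unit_mod f (prod g I)"
  by (induction I rule: infinite_finite_induct) (simp_all add: unit_mod_1 unit_mod_mult)

lemma integral_mod_divide: "integral_mod f A \<Longrightarrow> unit_mod f B \<Longrightarrow> integral_mod f (A / B)"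
  by (simp add: divide_inverse integral_mod_mult unit_mod_imp_integral_mod unit_mod_inverse)

lemma zero_mod_Fract_1: "f dvd P \<Longrightarrow> zero_mod f (Fract P 1)"
  unfolding zero_mod_def by (intro exI[of _ P] exI[of _ 1]) (simp add: invertible_mod_1)

lemma zero_mod_0: "zero_mod f 0"
  using zero_mod_Fract_1[of f 0] by (simp add: Zero_fract_def)

lemma zero_mod_imp_integral_mod: "zero_mod f A \<Longrightarrow> integral_mod f A"
  unfolding zero_mod_def integral_mod_def by blast

lemma zero_mod_add:
  assumes "zero_mod f A" and "zero_mod f B"
  shows "zero_mod f (A + B)"
proof -
  obtain P Q P' Q' where "Q \<noteq> 0" "invertible_mod f Q" "f dvd P" "A = Fract P Q"
    and "Q' \<noteq> 0" "invertible_mod f Q'" "f dvd P'" "B = Fract P' Q'"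
    using assms unfolding zero_mod_def by blast
  then show ?thesis
    unfolding zero_mod_def
    by (intro exI[of _ "P * Q' + P' * Q"] exI[of _ "Q * Q'"]) (simp add: invertible_mod_mult)
qed

lemma zero_mod_uminus:
  assumes "zero_mod f A"
  shows "zero_mod f (- A)"
proof -
  obtain P Q where "Q \<noteq> 0" "invertible_mod f Q" "f dvd P" "A = Fract P Q"
    using assms unfolding zero_mod_def by blast
  then show ?thesis unfolding zero_mod_def by (intro exI[of _ "- P"] exI[of _ Q]) simp
qed

lemma zero_mod_mult:
  assumes "zero_mod f A" and "integral_mod f B"
  shows "zero_mod f (A * B)"
proof -
  obtain P Q P' Q' where "Q \<noteq> 0" "invertible_mod f Q" "f dvd P" "A = Fract P Q"
    and "Q' \<noteq> 0" "invertible_mod f Q'" "B = Fract P' Q'"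
    using assms unfolding zero_mod_def integral_mod_def by blast
  then show ?thesis
    unfolding zero_mod_def
    by (intro exI[of _ "P * P'"] exI[of _ "Q * Q'"]) (simp add: invertible_mod_mult)
qed

lemma zero_mod_sum: "(\<And>i. i \<in> I \<Longrightarrow> zero_mod f (g i)) \<Longrightarrow> zero_mod f (sum g I)"
  by (induction I rule: infinite_finite_induct) (simp_all add: zero_mod_0 zero_mod_add)

lemma zero_mod_cancel:
  assumes "zero_mod f (A * U)" and "unit_mod f U"
  shows "zero_mod f A"
proof -
  have "zero_mod f (A * U * inverse U)"
    using assms by (blast intro: zero_mod_mult unit_mod_imp_integral_mod unit_mod_inverse)
  moreover have "A * U * inverse U = A" using unit_mod_nonzero[OF assms(2)] by simp
  ultimately show ?thesis by simp
qed

lemma zero_mod_inverse_minus_one: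
  assumes "zero_mod f (A - 1)" and "unit_mod f A"
  shows "zero_mod f (inverse A - 1)"
proof -
  have "zero_mod f (- (A - 1) * inverse A)"
    using assms by (intro zero_mod_mult zero_mod_uminus unit_mod_imp_integral_mod unit_mod_inverse)
  moreover have "- (A - 1) * inverse A = inverse A - 1"
    using unit_mod_nonzero[OF assms(2)] by (simp add: algebra_simps)
  ultimately show ?thesis by simp
qed

lemma cong_mod_refl: "cong_mod f A A"
  by (simp add: cong_mod_def zero_mod_0)

lemma cong_mod_trans [trans]: "cong_mod f A B \<Longrightarrow> cong_mod f B C \<Longrightarrow> cong_mod f A C"
  unfolding cong_mod_def using zero_mod_add by fastforce

lemma cong_mod_add: "cong_mod f A A' \<Longrightarrow> cong_mod f B B' \<Longrightarrow> cong_mod f (A + B) (A' + B')"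
  unfolding cong_mod_def using zero_mod_add by (fastforce simp: algebra_simps)

lemma cong_mod_diff: "cong_mod f A A' \<Longrightarrow> cong_mod f B B' \<Longrightarrow> cong_mod f (A - B) (A' - B')"
  unfolding cong_mod_def using zero_mod_add zero_mod_uminus by (fastforce simp: algebra_simps)

lemma cong_mod_mult:
  assumes "cong_mod f A A'" and "cong_mod f B B'" and "integral_mod f B" and "integral_mod f A'"
  shows "cong_mod f (A * B) (A' * B')"
proof -
  have "A * B - A' * B' = (A - A') * B + (B - B') * A'" by (simp add: algebra_simps)
  moreover have "zero_mod f ((A - A') * B + (B - B') * A')"
    using assms unfolding cong_mod_def by (intro zero_mod_add zero_mod_mult)
  ultimately show ?thesis unfolding cong_mod_def by simp
qed

lemma cong_mod_mult_left:
  "cong_mod f B B' \<Longrightarrow> integral_mod f A \<Longrightarrow> integral_mod f B \<Longrightarrow> cong_mod f (A * B) (A * B')"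
  by (rule cong_mod_mult[OF cong_mod_refl])

lemma cong_mod_power:
  "cong_mod f A B \<Longrightarrow> integral_mod f A \<Longrightarrow> integral_mod f B \<Longrightarrow> cong_mod f (A ^ n) (B ^ n)"
  by (induction n) (simp_all add: cong_mod_refl cong_mod_mult integral_mod_power)

lemma cong_mod_prod:
  assumes "\<And>i. i \<in> I \<Longrightarrow> cong_mod f (g i) (h i)"
    and "\<And>i. i \<in> I \<Longrightarrow> integral_mod f (g i)" and "\<And>i. i \<in> I \<Longrightarrow> integral_mod f (h i)"
  shows "cong_mod f (prod g I) (prod h I)"
  using assms
  by (induction I rule: infinite_finite_induct) (simp_all add: cong_mod_refl cong_mod_mult integral_mod_prod)

lemma cong_mod_divide:
  assumes "cong_mod f A A'" and "unit_mod f B"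
  shows "cong_mod f (A / B) (A' / B)"
proof -
  have "zero_mod f ((A - A') * inverse B)"
    using assms unfolding cong_mod_def by (intro zero_mod_mult unit_mod_imp_integral_mod unit_mod_inverse)
  then show ?thesis unfolding cong_mod_def by (simp add: divide_inverse algebra_simps)
qed

lemma zero_mod_imp_cong0_mod: "zero_mod f A \<Longrightarrow> cong0_mod A f"
  unfolding zero_mod_def cong0_mod_def using coprime_if_invertible_mod by blast

section \<open>The modulus \<open>\<Phi>\<^sub>m(q\<^sup>2)\<close>\<close>

lemma map_poly_add_hom:
  assumes "h 0 = 0" and "\<And>x y. h (x + y) = h x + h y"
  shows "map_poly h (p + q) = map_poly h p + map_poly h q"
  by (rule poly_eqI) (simp add: coeff_map_poly assms)

lemma map_poly_diff_hom:
  assumes "h 0 = 0" and "\<And>x y. h (x - y) = h x - h y"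
  shows "map_poly h (p - q) = map_poly h p - map_poly h q"
  by (rule poly_eqI) (simp add: coeff_map_poly assms)

lemma map_poly_mult_hom:
  fixes h :: "'a::comm_semiring_1 \<Rightarrow> 'b::comm_semiring_1"
  assumes "h 0 = 0" and "\<And>x y. h (x + y) = h x + h y" and "\<And>x y. h (x * y) = h x * h y"
  shows "map_poly h (p * q) = map_poly h p * map_poly h q"
proof (induction p)
  case (pCons a p)
  have "map_poly h (pCons a p * q) = map_poly h (smult a q + pCons 0 (p * q))"
    by simp
  also have "\<dots> = smult (h a) (map_poly h q) + pCons 0 (map_poly h p * map_poly h q)"
    by (simp add: map_poly_add_hom[OF assms(1,2)] map_poly_smult map_poly_pCons assms pCons.IH)
  also have "\<dots> = map_poly h (pCons a p) * map_poly h q"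
    by (simp add: map_poly_pCons assms(1))
  finally show ?case .
qed simp

lemma Fract_const_0: "Fract [:0:] 1 = (0 :: KF)"
  by (simp add: Zero_fract_def)

lemma Fract_const_add: "Fract [:x + y:] 1 = (Fract [:x:] 1 + Fract [:y:] 1 :: KF)"
  by simp

lemma Fract_const_diff: "Fract [:x - y:] 1 = (Fract [:x:] 1 - Fract [:y:] 1 :: KF)"
  by simp

lemma Fract_const_mult: "Fract [:x * y:] 1 = (Fract [:x:] 1 * Fract [:y:] 1 :: KF)"
  by (simp add: mult.commute)

definition subst_q2 :: "rat poly \<Rightarrow> RP" where
  "subst_q2 P = pcompose (map_poly (\<lambda>c. Fract [:c:] 1) P) [:0, 0, 1:]"

lemma cyclo_q2_eq_subst_q2: "cyclo_q2 m = subst_q2 (cyclotomic m)"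
  by (simp add: cyclo_q2_def subst_q2_def)

lemma subst_q2_add: "subst_q2 (P + Q) = subst_q2 P + subst_q2 Q"
  unfolding subst_q2_def
    map_poly_add_hom[where h = "\<lambda>c. Fract [:c:] 1", OF Fract_const_0 Fract_const_add]
  by (rule pcompose_add)

lemma subst_q2_diff: "subst_q2 (P - Q) = subst_q2 P - subst_q2 Q"
  unfolding subst_q2_def
    map_poly_diff_hom[where h = "\<lambda>c. Fract [:c:] 1", OF Fract_const_0 Fract_const_diff]
  by (rule pcompose_diff)

lemma subst_q2_mult: "subst_q2 (P * Q) = subst_q2 P * subst_q2 Q"
  unfolding subst_q2_def map_poly_mult_hom[where h = "\<lambda>c. Fract [:c:] 1",
      OF Fract_const_0 Fract_const_add Fract_const_mult]
  by (rule pcompose_mult)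

lemma subst_q2_1: "subst_q2 1 = 1"
  by (simp add: subst_q2_def map_poly_1 pcompose_const pcompose_1 pCons_one flip: One_fract_def)

lemma subst_q2_power: "subst_q2 (P ^ n) = subst_q2 P ^ n"
  by (induction n) (simp_all add: subst_q2_1 subst_q2_mult)

lemma subst_q2_X_power_minus_one: "subst_q2 ([:0, 1:] ^ n - 1) = [:0, 0, 1:] ^ n - 1"
  by (simp add: subst_q2_diff subst_q2_power subst_q2_1)
    (simp add: subst_q2_def map_poly_pCons Zero_fract_def One_fract_def one_pCons pcompose_pCons)

lemma cyclo_q2_dvd_q2_power_minus_one:
  assumes "m > 0" and "m dvd j"
  shows "cyclo_q2 m dvd [:0, 0, 1:] ^ j - 1"
proof -
  obtain P where "[:0, 1:] ^ m - 1 = cyclotomic m * P"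
    using cyclotomic_dvd_X_power_minus_one[OF assms(1)] by blast
  from arg_cong[OF this, of subst_q2] have "[:0, 0, 1:] ^ m - 1 = cyclo_q2 m * subst_q2 P"
    by (simp add: subst_q2_X_power_minus_one subst_q2_mult cyclo_q2_eq_subst_q2)
  then have "cyclo_q2 m dvd [:0, 0, 1:] ^ m - 1" by simp
  then show ?thesis
    using power_minus_one_dvd_power_minus_one[OF assms(2)] by (rule dvd_trans)
qed

lemma invertible_mod_q2_power_minus_one:
  assumes "m > 0" and "j > 0" and "\<not> m dvd j"
  shows "invertible_mod (cyclo_q2 m) ([:0, 0, 1:] ^ j - 1)"
proof -
  define u where "u = fst (bezout_coefficients (cyclotomic m) ([:0, 1:] ^ j - 1))"
  define v where "v = snd (bezout_coefficients (cyclotomic m) ([:0, 1:] ^ j - 1))"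
  have "u * cyclotomic m + v * ([:0, 1:] ^ j - 1) = gcd (cyclotomic m) ([:0, 1:] ^ j - 1)"
    unfolding u_def v_def by (rule bezout_coefficients_fst_snd)
  also have "\<dots> = 1"
    using coprime_cyclotomic_X_power_minus_one[OF assms] by simp
  finally have "u * cyclotomic m + v * ([:0, 1:] ^ j - 1) = 1" .
  from arg_cong[OF this, of subst_q2]
  have "subst_q2 u * cyclo_q2 m + subst_q2 v * ([:0, 0, 1:] ^ j - 1) = 1"
    by (simp add: subst_q2_1 subst_q2_add subst_q2_mult subst_q2_X_power_minus_one cyclo_q2_eq_subst_q2)
  then have "([:0, 0, 1:] ^ j - 1) * subst_q2 v - 1 = cyclo_q2 m * - subst_q2 u"
    by (simp add: algebra_simps)
  then show ?thesis unfolding invertible_mod_def by (intro exI[of _ "subst_q2 v"]) simp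
qed

lemma Fract_1_power: "Fract P 1 ^ n = Fract (P ^ n) 1"
  by (induction n) (simp_all add: One_fract_def)

lemma Fract_1_minus: "1 - Fract P 1 = Fract (1 - P) 1"
  by (simp add: One_fract_def)

lemma var_q_power: "var_q ^ n = Fract ([:0, 1:] ^ n) 1"
  by (simp add: var_q_def Fract_1_power)

lemma X_squared: "[:0, 1:] ^ 2 = [:0, 0, 1:]"
  by (simp add: power2_eq_square)

lemma var_q_power_double: "var_q ^ (2 * j) = Fract ([:0, 0, 1:] ^ j) 1"
  by (simp only: var_q_power power_mult X_squared Fract_1_power)

lemma var_q_nonzero: "var_q \<noteq> 0"
  by (simp add: var_q_def flip: to_fract_def)

lemma var_q_power_eq_powi: "(var_q ^ a) ^ b = var_q powi (int a * int b)"
  by (simp add: power_int_of_nat flip: power_mult of_nat_mult)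

definition alpha :: KF where "alpha = Fract [:0, 1:] 1"

lemma var_a_eq: "var_a = Fract [:alpha:] 1"
  by (simp add: var_a_def alpha_def)

lemma alpha_power_ne_1:
  assumes "m > 0"
  shows "alpha ^ m \<noteq> 1"
proof -
  have "poly ([:0, 1:] ^ m :: rat poly) 0 \<noteq> poly 1 0" using assms by (simp add: power_0_left)
  then have "[:0, 1:] ^ m \<noteq> (1 :: rat poly)" by metis
  then show ?thesis by (simp add: alpha_def Fract_1_power One_fract_def eq_fract)
qed

lemma alpha_nonzero: "alpha \<noteq> 0"
  by (simp add: alpha_def flip: to_fract_def)

lemma unit_mod_var_a: "unit_mod f var_a"
proof -
  have "[:alpha:] * [:inverse alpha:] - [:1:] = 0" using alpha_nonzero by simp
  then have "invertible_mod f [:alpha:]"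
    by (intro invertible_mod_if_dvd_minus_unit[of f _ "[:inverse alpha:]" "[:1:]"])
      (simp_all add: pCons_one)
  then show ?thesis unfolding var_a_eq using alpha_nonzero by (intro unit_mod_Fract_1) simp_all
qed

lemma unit_mod_two: "unit_mod (f :: RP) 2"
proof -
  have "(2 :: RP) * [:1 / 2:] - 1 = 0" by (simp add: numeral_poly one_pCons)
  then have "invertible_mod f 2" unfolding invertible_mod_def by (intro exI[of _ "[:1 / 2:]"]) simp
  then have "unit_mod f (Fract 2 1)" by (rule unit_mod_Fract_1[rotated]) simp
  moreover have "Fract 2 1 = (2 :: RF)" using of_nat_fract[of 2] by simp
  ultimately show ?thesis by simp
qed

context
  fixes m :: nat
  assumes m_pos: "m > 0"
begin

lemma unit_mod_var_q: "unit_mod (cyclo_q2 m) var_q"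
proof -
  have "[:0, 1:] * [:0, 1:] ^ (2 * m - 1) = [:0, 1:] ^ (2 * m)"
    by (subst power_Suc[symmetric]) (use m_pos in simp)
  also have "\<dots> = [:0, 0, 1:] ^ m" by (simp only: power_mult X_squared)
  finally have X_power: "[:0, 1:] * [:0, 1:] ^ (2 * m - 1) = [:0, 0, 1:] ^ m" .
  have "cyclo_q2 m dvd [:0, 1:] * [:0, 1:] ^ (2 * m - 1) - 1"
    unfolding X_power by (rule cyclo_q2_dvd_q2_power_minus_one[OF m_pos dvd_refl])
  then have "invertible_mod (cyclo_q2 m) [:0, 1:]"
    by (rule invertible_mod_if_dvd_minus_unit) simp
  then show ?thesis unfolding var_q_def by (rule unit_mod_Fract_1[rotated]) simp
qed

lemma unit_mod_var_q_powi: "unit_mod (cyclo_q2 m) (var_q powi e)"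
  by (rule unit_mod_power_int[OF unit_mod_var_q])

lemma integral_mod_var_q_powi: "integral_mod (cyclo_q2 m) (var_q powi e)"
  by (rule unit_mod_imp_integral_mod[OF unit_mod_var_q_powi])

lemma integral_mod_var_q_power: "integral_mod (cyclo_q2 m) (var_q ^ n)"
  using integral_mod_var_q_powi[of "int n"] by simp

lemma zero_mod_var_q_powi_minus_one:
  assumes "2 * int m dvd e"
  shows "zero_mod (cyclo_q2 m) (var_q powi e - 1)"
proof -
  have power: "zero_mod (cyclo_q2 m) (var_q ^ (2 * (m * k)) - 1)" for k
  proof -
    have "var_q ^ (2 * (m * k)) - 1 = Fract ([:0, 0, 1:] ^ (m * k) - 1) 1"
      by (simp add: var_q_power_double One_fract_def)
    then show ?thesis
      using cyclo_q2_dvd_q2_power_minus_one[OF m_pos, of "m * k"] by (simp add: zero_mod_Fract_1)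
  qed
  obtain z where e: "e = 2 * int m * z" using assms by blast
  show ?thesis
  proof (cases "z \<ge> 0")
    case True
    then have "e = int (2 * (m * nat z))" unfolding e by simp
    then show ?thesis using power by (simp only: power_int_of_nat)
  next
    case False
    then have "e = - int (2 * (m * nat (- z)))" unfolding e by simp
    then have "var_q powi e = inverse (var_q ^ (2 * (m * nat (- z))))"
      by (simp only: power_int_minus power_int_of_nat)
    then show ?thesis
      using zero_mod_inverse_minus_one[OF power unit_mod_power[OF unit_mod_var_q]] by simp
  qed
qed

lemma cong_mod_var_q_powi:
  assumes "2 * int m dvd e - e'"
  shows "cong_mod (cyclo_q2 m) (var_q powi e) (var_q powi e')"
proof -
  have "var_q powi e = var_q powi (e - e') * var_q powi e'"
    by (metis diff_add_cancel power_int_add var_q_nonzero)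
  then have "var_q powi e - var_q powi e' = (var_q powi (e - e') - 1) * var_q powi e'"
    by (simp add: algebra_simps)
  moreover have "zero_mod (cyclo_q2 m) ((var_q powi (e - e') - 1) * var_q powi e')"
    using assms by (intro zero_mod_mult zero_mod_var_q_powi_minus_one integral_mod_var_q_powi)
  ultimately show ?thesis unfolding cong_mod_def by simp
qed

lemma unit_mod_one_minus_var_q2_power:
  assumes "j > 0" and "\<not> m dvd j"
  shows "unit_mod (cyclo_q2 m) (1 - var_q ^ (2 * j))"
proof -
  obtain u where u: "cyclo_q2 m dvd ([:0, 0, 1:] ^ j - 1) * u - 1"
    using invertible_mod_q2_power_minus_one[OF m_pos assms] unfolding invertible_mod_def by blast
  have "(1 - [:0, 0, 1:] ^ j) * - u = ([:0, 0, 1:] ^ j - 1) * u" by (simp add: algebra_simps)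
  then have "invertible_mod (cyclo_q2 m) (1 - [:0, 0, 1:] ^ j)"
    unfolding invertible_mod_def using u by metis
  moreover have "poly (1 - [:0, 0, 1:] ^ j) 0 \<noteq> (0 :: KF)" using assms(1) by (simp add: power_0_left)
  then have "1 - [:0, 0, 1:] ^ j \<noteq> (0 :: RP)" by (metis poly_0)
  ultimately show ?thesis by (simp add: var_q_power_double Fract_1_minus unit_mod_Fract_1)
qed

lemma unit_mod_one_minus_const_q2_power:
  assumes "c ^ m \<noteq> 1"
  shows "unit_mod (cyclo_q2 m) (1 - Fract [:c:] 1 * var_q ^ (2 * j))"
proof -
  define W where "W = [:c:] * [:0, 0, 1:] ^ j"
  have geometric: "(1 - W) * (\<Sum>i<m. W ^ i) - [:1 - c ^ m:] = [:c ^ m:] * (1 - [:0, 0, 1:] ^ (m * j))"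
  proof -
    have "(1 - W) * (\<Sum>i<m. W ^ i) = 1 - W ^ m"
      using power_diff_1_eq[of W m] by (simp add: algebra_simps)
    moreover have "W ^ m = [:c ^ m:] * [:0, 0, 1:] ^ (m * j)"
      by (simp only: W_def power_mult_distrib poly_const_pow mult.commute[of m j] power_mult)
    ultimately show ?thesis by (simp add: algebra_simps one_pCons)
  qed
  have "cyclo_q2 m dvd [:c ^ m:] * (1 - [:0, 0, 1:] ^ (m * j))"
  proof -
    have "[:c ^ m:] * (1 - [:0, 0, 1:] ^ (m * j)) = - [:c ^ m:] * ([:0, 0, 1:] ^ (m * j) - 1)"
      by (simp add: algebra_simps)
    then show ?thesis
      using cyclo_q2_dvd_q2_power_minus_one[OF m_pos dvd_triv_left] by (simp only: dvd_mult)
  qed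
  then have "cyclo_q2 m dvd (1 - W) * (\<Sum>i<m. W ^ i) - [:1 - c ^ m:]"
    by (simp only: geometric)
  moreover have "is_unit [:1 - c ^ m:]"
    using assms by (simp add: is_unit_const_poly_iff dvd_field_iff)
  ultimately have "invertible_mod (cyclo_q2 m) (1 - W)"
    by (rule invertible_mod_if_dvd_minus_unit)
  moreover have "poly (1 - W) 0 \<noteq> 0"
    using assms by (cases j) (auto simp: W_def)
  then have "1 - W \<noteq> 0" by (metis poly_0)
  ultimately show ?thesis
    by (simp add: W_def var_q_power_double Fract_1_minus unit_mod_Fract_1)
qed

lemma unit_mod_one_minus_var_a_q2_power: "unit_mod (cyclo_q2 m) (1 - var_a * var_q ^ (2 * j))"
  unfolding var_a_eq using alpha_power_ne_1[OF m_pos] by (rule unit_mod_one_minus_const_q2_power)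

lemma unit_mod_one_minus_q2_power_div_var_a: "unit_mod (cyclo_q2 m) (1 - var_q ^ (2 * j) / var_a)"
proof -
  have "inverse var_a = Fract [:inverse alpha:] 1"
    using alpha_nonzero by (simp add: var_a_eq eq_fract one_pCons)
  then have "var_q ^ (2 * j) / var_a = Fract [:inverse alpha:] 1 * var_q ^ (2 * j)"
    by (simp add: divide_inverse mult.commute)
  moreover have "inverse alpha ^ m \<noteq> 1"
    using alpha_power_ne_1[OF m_pos] by (simp add: power_inverse)
  ultimately show ?thesis using unit_mod_one_minus_const_q2_power by simp
qed

end

lemma unit_mod_one_minus_var_q:
  assumes "m > 1"
  shows "unit_mod (cyclo_q2 m) (1 - var_q)"
proof -
  have "invertible_mod (cyclo_q2 m) ([:0, 0, 1:] ^ 1 - 1)"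
    using assms by (intro invertible_mod_q2_power_minus_one) auto
  moreover have "[:0, 0, 1:] ^ 1 - 1 = (1 - [:0, 1:]) * - (1 + [:0, 1:] :: RP)"
    by (simp add: algebra_simps flip: X_squared)
  ultimately have "invertible_mod (cyclo_q2 m) (1 - [:0, 1:])"
    by (metis invertible_mod_factor)
  moreover have "poly (1 - [:0, 1:]) 0 \<noteq> (0 :: KF)" by simp
  then have "1 - [:0, 1:] \<noteq> (0 :: RP)" by (metis poly_0)
  ultimately show ?thesis by (simp add: var_q_def Fract_1_minus unit_mod_Fract_1)
qed

lemma unit_mod_one_minus_var_q_squared:
  assumes "m > 1"
  shows "unit_mod (cyclo_q2 m) (1 - var_q ^ 2)"
  using unit_mod_one_minus_var_q2_power[of m 1] assms by simp

section \<open>Products of \<open>q\<close>-Pochhammer symbols\<close>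

lemma var_a_nonzero: "var_a \<noteq> 0"
  using alpha_nonzero by (simp add: var_a_eq flip: to_fract_def)

definition poch_factor :: "RF \<Rightarrow> RF" where
  "poch_factor x = (1 - x) ^ 2 * (1 - var_a * x) * (1 - x / var_a)"

definition poch_prod :: "RF \<Rightarrow> RF \<Rightarrow> nat \<Rightarrow> RF" where
  "poch_prod p y k = (\<Prod>i<k. poch_factor (y * p ^ i))"

lemma qpoch_product_eq_poch_prod:
  "qpoch y p k ^ 2 * qpoch (var_a * y) p k * qpoch (y / var_a) p k = poch_prod p y k"
proof -
  have "qpoch y p k ^ 2 * qpoch (var_a * y) p k * qpoch (y / var_a) p k =
      (\<Prod>i<k. (1 - y * p ^ i) ^ 2 * (1 - var_a * y * p ^ i) * (1 - y / var_a * p ^ i))"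
    by (simp add: qpoch_def prod_power_distrib prod.distrib)
  also have "\<dots> = poch_prod p y k"
    unfolding poch_prod_def poch_factor_def by (rule prod.cong) (simp_all add: mult.assoc)
  finally show ?thesis .
qed

lemma poch_factor_inverse:
  assumes "x \<noteq> 0"
  shows "poch_factor (inverse x) = inverse (x ^ 4) * poch_factor x"
  using assms var_a_nonzero
  by (simp add: poch_factor_def field_simps) (simp add: algebra_simps power2_eq_square power4_eq_xxxx)

lemma poch_prod_reversed:
  assumes "k \<le> n"
  shows "(\<Prod>i<k. poch_factor (p ^ (n - i))) * poch_prod p p (n - k) = poch_prod p p n"
  using assms
proof (induction k)
  case (Suc k)
  have "n - k = Suc (n - Suc k)" using Suc.prems by simp
  then have "poch_prod p p (n - k) = poch_prod p p (n - Suc k) * poch_factor (p ^ (n - k))"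
    by (simp add: poch_prod_def)
  then show ?case using Suc by (simp add: ac_simps)
qed simp

lemma prod_reversed_powers_square:
  fixes x :: "'a::comm_monoid_mult"
  assumes "k \<le> n"
  shows "(\<Prod>i<k. x ^ (n - i)) ^ 2 = x ^ (k * (2 * n + 1 - k))"
  using assms
proof (induction k)
  case (Suc k)
  obtain r where n: "n = Suc k + r" using Suc.prems le_Suc_ex by blast
  have "Suc k * (2 * n + 1 - Suc k) = k * (2 * n + 1 - k) + (n - k) * 2"
    unfolding n by (simp add: algebra_simps)
  then show ?case
    using Suc by (simp add: power_mult_distrib power_add flip: power_mult)
qed simp

lemma prod_poch_factor_inverse:
  assumes "\<And>i. i \<in> I \<Longrightarrow> x i \<noteq> 0"
  shows "(\<Prod>i\<in>I. poch_factor (inverse (x i))) = inverse ((\<Prod>i\<in>I. x i) ^ 4) * (\<Prod>i\<in>I. poch_factor (x i))"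
proof -
  have "(\<Prod>i\<in>I. poch_factor (inverse (x i))) = (\<Prod>i\<in>I. inverse (x i ^ 4)) * (\<Prod>i\<in>I. poch_factor (x i))"
    using assms by (simp add: poch_factor_inverse prod.distrib)
  moreover have "(\<Prod>i\<in>I. inverse (x i ^ 4)) = inverse ((\<Prod>i\<in>I. x i) ^ 4)"
    using prod_inversef[of "\<lambda>i. x i ^ 4" I] by (simp add: o_def prod_power_distrib)
  ultimately show ?thesis by simp
qed

lemma prod_base_powers_fourth:
  assumes "k \<le> n"
  shows "(\<Prod>i<k. (var_q ^ (2 * d)) ^ (n - i)) ^ 4 = var_q powi (4 * int d * int k * (2 * int n + 1 - int k))"
proof -
  have "(\<Prod>i<k. (var_q ^ (2 * d)) ^ (n - i)) ^ 4 = ((\<Prod>i<k. (var_q ^ (2 * d)) ^ (n - i)) ^ 2) ^ 2"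
    by (simp flip: power_mult)
  also have "\<dots> = ((var_q ^ (2 * d)) ^ (k * (2 * n + 1 - k))) ^ 2"
    using assms by (simp only: prod_reversed_powers_square)
  also have "\<dots> = var_q ^ (4 * d * (k * (2 * n + 1 - k)))"
    by (simp add: ac_simps flip: power_mult)
  also have "\<dots> = var_q powi int (4 * d * (k * (2 * n + 1 - k)))"
    by (rule power_int_of_nat[symmetric])
  also have "int (4 * d * (k * (2 * n + 1 - k))) = 4 * int d * int k * (2 * int n + 1 - int k)"
    using assms by (simp add: of_nat_diff)
  finally show ?thesis .
qed

lemma integral_mod_poch_factor: "integral_mod f x \<Longrightarrow> integral_mod f (poch_factor x)"
  unfolding poch_factor_def
  by (intro integral_mod_mult integral_mod_power integral_mod_diff integral_mod_1 integral_mod_divide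
      unit_mod_var_a unit_mod_imp_integral_mod[OF unit_mod_var_a])

lemma integral_mod_poch_prod:
  "integral_mod f y \<Longrightarrow> integral_mod f p \<Longrightarrow> integral_mod f (poch_prod p y k)"
  unfolding poch_prod_def by (intro integral_mod_prod integral_mod_poch_factor integral_mod_mult integral_mod_power)

lemma cong_mod_poch_factor:
  "cong_mod f x x' \<Longrightarrow> integral_mod f x \<Longrightarrow> integral_mod f x' \<Longrightarrow> cong_mod f (poch_factor x) (poch_factor x')"
  unfolding poch_factor_def
  by (intro cong_mod_mult cong_mod_power cong_mod_diff cong_mod_refl cong_mod_mult_left cong_mod_divide
      unit_mod_var_a unit_mod_imp_integral_mod[OF unit_mod_var_a]
      integral_mod_mult integral_mod_power integral_mod_diff integral_mod_1 integral_mod_divide)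

lemma zero_mod_poch_factor:
  assumes "zero_mod f (1 - x)" and "integral_mod f x"
  shows "zero_mod f (poch_factor x)"
proof -
  have "poch_factor x = (1 - x) * ((1 - x) * (1 - var_a * x) * (1 - x / var_a))"
    by (simp add: poch_factor_def power2_eq_square ac_simps)
  then show ?thesis
    using assms
    by (simp add: zero_mod_mult integral_mod_mult integral_mod_diff integral_mod_1 integral_mod_divide
        unit_mod_var_a unit_mod_imp_integral_mod[OF unit_mod_var_a] zero_mod_imp_integral_mod)
qed

context
  fixes m d :: nat
  assumes m_pos: "m > 0" and coprime_dm: "coprime d m"
begin

lemma unit_mod_poch_factor_base_power:
  assumes "0 < j" and "j < m"
  shows "unit_mod (cyclo_q2 m) (poch_factor ((var_q ^ (2 * d)) ^ j))"
proof -
  have "\<not> m dvd d * j"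
  proof
    assume "m dvd d * j"
    then have "m dvd j" using coprime_dm by (simp add: coprime_commute coprime_dvd_mult_right_iff)
    then show False using assms by (simp add: nat_dvd_not_less)
  qed
  then have "0 < d * j" by (metis dvd_0_right not_gr0)
  have "(var_q ^ (2 * d)) ^ j = var_q ^ (2 * (d * j))" by (simp add: mult.assoc flip: power_mult)
  then show ?thesis
    unfolding poch_factor_def
    using \<open>0 < d * j\<close> \<open>\<not> m dvd d * j\<close>
    by (simp add: unit_mod_mult unit_mod_power unit_mod_one_minus_var_q2_power[OF m_pos]
        unit_mod_one_minus_var_a_q2_power[OF m_pos] unit_mod_one_minus_q2_power_div_var_a[OF m_pos])
qed

lemma unit_mod_poch_prod_base:
  assumes "k < m"
  shows "unit_mod (cyclo_q2 m) (poch_prod (var_q ^ (2 * d)) (var_q ^ (2 * d)) k)"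
  unfolding poch_prod_def
proof (rule unit_mod_prod)
  fix i assume "i \<in> {..<k}"
  then show "unit_mod (cyclo_q2 m) (poch_factor (var_q ^ (2 * d) * (var_q ^ (2 * d)) ^ i))"
    using unit_mod_poch_factor_base_power[of "Suc i"] assms by simp
qed

end

section \<open>Cancellation of the terms \<open>k\<close> and \<open>n - k\<close>\<close>

definition summand :: "nat \<Rightarrow> int \<Rightarrow> nat \<Rightarrow> RF" where
  "summand d t k = qint2 (2 * int d * int k + t) * (qint (2 * int d * int k + t))^2 *
       (qpoch (var_q powi (2 * t)) (var_q ^ (2 * d)) k ^ 2 *
        qpoch (var_a * var_q powi (2 * t)) (var_q ^ (2 * d)) k *
        qpoch (var_q powi (2 * t) / var_a) (var_q ^ (2 * d)) k) /
       (qpoch (var_q ^ (2 * d)) (var_q ^ (2 * d)) k ^ 2 *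
        qpoch (var_a * var_q ^ (2 * d)) (var_q ^ (2 * d)) k *
        qpoch (var_q ^ (2 * d) / var_a) (var_q ^ (2 * d)) k) *
       var_q powi (- 4 * t * int k)"

definition poch_binomial :: "nat \<Rightarrow> nat \<Rightarrow> nat \<Rightarrow> RF" where
  "poch_binomial d n k = poch_prod (var_q ^ (2 * d)) (var_q ^ (2 * d)) n /
     (poch_prod (var_q ^ (2 * d)) (var_q ^ (2 * d)) k * poch_prod (var_q ^ (2 * d)) (var_q ^ (2 * d)) (n - k))"

definition antisym_part :: "nat \<Rightarrow> int \<Rightarrow> nat \<Rightarrow> nat \<Rightarrow> RF" where
  "antisym_part d t n k =
     (1 - var_q powi (2 * (2 * int d * int k + t))) * (1 - var_q powi (2 * int d * int k + t)) ^ 2 *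
     var_q powi (- 4 * int k * (int d * (2 * int n + 1 - int k) + t))"

lemma summand_eq_poch_prod:
  "summand d t k = qint2 (2 * int d * int k + t) * qint (2 * int d * int k + t) ^ 2 *
     poch_prod (var_q ^ (2 * d)) (var_q powi (2 * t)) k /
     poch_prod (var_q ^ (2 * d)) (var_q ^ (2 * d)) k * var_q powi (- 4 * t * int k)"
  unfolding summand_def qpoch_product_eq_poch_prod ..

lemma power_int_reflection_identity:
  fixes x :: "'a::field"
  assumes "x \<noteq> 0"
  shows "(1 - x powi (- (2 * u))) * (1 - x powi (- u)) ^ 2 * x powi (e + 4 * u) =
    - ((1 - x powi (2 * u)) * (1 - x powi u) ^ 2 * x powi e)"
proof -
  define y where "y = x powi u"
  have "y \<noteq> 0" using assms by (simp add: y_def)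
  note powi_add = power_int_add[OF disjI1[OF assms]]
  have "x powi (2 * u) = y * y" by (simp only: y_def mult_2 powi_add)
  moreover have "x powi (e + 4 * u) = x powi e * (y * y * (y * y))"
  proof -
    have "e + 4 * u = e + ((u + u) + (u + u))" by simp
    then show ?thesis by (simp only: y_def powi_add)
  qed
  ultimately show ?thesis
    using \<open>y \<noteq> 0\<close> by (simp add: power_int_minus flip: y_def) (simp add: field_simps power2_eq_square)
qed

context
  fixes m d n :: nat and t s :: int
  assumes m_gt_1: "m > 1" and coprime_dm: "coprime d m" and n_less: "n < m"
    and shift: "t + int d * int n = int m * s"
  notes m_pos = less_trans[OF zero_less_one m_gt_1]
begin

lemma cong_mod_shifted_base_power:
  assumes "i \<le> n"
  shows "cong_mod (cyclo_q2 m) (var_q powi (2 * t) * (var_q ^ (2 * d)) ^ i)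
    (inverse ((var_q ^ (2 * d)) ^ (n - i)))"
proof -
  have "var_q powi (2 * t) * (var_q ^ (2 * d)) ^ i = var_q powi (2 * t + 2 * int d * int i)"
    by (simp add: var_q_power_eq_powi power_int_add var_q_nonzero)
  moreover have "inverse ((var_q ^ (2 * d)) ^ (n - i)) = var_q powi (- (2 * int d * int (n - i)))"
    by (simp add: var_q_power_eq_powi power_int_minus)
  moreover have "2 * t + 2 * int d * int i - - (2 * int d * int (n - i)) = 2 * int m * s"
    using assms shift by (simp add: of_nat_diff algebra_simps)
  ultimately show ?thesis by (simp add: cong_mod_var_q_powi[OF m_pos])
qed

lemma integral_mod_shifted_base_power:
  "integral_mod (cyclo_q2 m) (var_q powi (2 * t) * (var_q ^ (2 * d)) ^ i)"
  by (intro integral_mod_mult integral_mod_power integral_mod_var_q_powi[OF m_pos]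
      integral_mod_var_q_power[OF m_pos])

lemma cong_mod_poch_prod_shifted:
  assumes "k \<le> n"
  shows "cong_mod (cyclo_q2 m) (poch_prod (var_q ^ (2 * d)) (var_q powi (2 * t)) k)
    (var_q powi (- (4 * int d * int k * (2 * int n + 1 - int k))) *
     (poch_prod (var_q ^ (2 * d)) (var_q ^ (2 * d)) n / poch_prod (var_q ^ (2 * d)) (var_q ^ (2 * d)) (n - k)))"
proof -
  let ?p = "var_q ^ (2 * d)" and ?G = "poch_prod (var_q ^ (2 * d)) (var_q ^ (2 * d))"
  have inverse_integral: "integral_mod (cyclo_q2 m) (inverse (?p ^ j))" for j
    by (intro unit_mod_imp_integral_mod unit_mod_inverse unit_mod_power unit_mod_var_q[OF m_pos])
  have "cong_mod (cyclo_q2 m) (poch_prod ?p (var_q powi (2 * t)) k)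
      (\<Prod>i<k. poch_factor (inverse (?p ^ (n - i))))"
    unfolding poch_prod_def
  proof (rule cong_mod_prod)
    fix i assume "i \<in> {..<k}"
    then have "i \<le> n" using assms by simp
    show "cong_mod (cyclo_q2 m) (poch_factor (var_q powi (2 * t) * ?p ^ i)) (poch_factor (inverse (?p ^ (n - i))))"
      by (intro cong_mod_poch_factor cong_mod_shifted_base_power \<open>i \<le> n\<close>
          integral_mod_shifted_base_power inverse_integral)
  qed (intro integral_mod_poch_factor integral_mod_shifted_base_power inverse_integral)+
  moreover have "(\<Prod>i<k. poch_factor (inverse (?p ^ (n - i)))) =
      inverse ((\<Prod>i<k. ?p ^ (n - i)) ^ 4) * (\<Prod>i<k. poch_factor (?p ^ (n - i)))"
    using var_q_nonzero by (intro prod_poch_factor_inverse) simp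
  moreover note prod_base_powers_fourth[OF assms]
  moreover have "(\<Prod>i<k. poch_factor (?p ^ (n - i))) = ?G n / ?G (n - k)"
    using poch_prod_reversed[OF assms, of ?p] unit_mod_nonzero[OF unit_mod_poch_prod_base[OF m_pos coprime_dm]]
      n_less by (simp add: field_simps)
  ultimately show ?thesis by (simp add: power_int_minus)
qed

lemma integral_mod_qint: "integral_mod (cyclo_q2 m) (qint j)"
  unfolding qint_def
  by (intro integral_mod_divide integral_mod_diff integral_mod_1 integral_mod_var_q_powi[OF m_pos]
      unit_mod_one_minus_var_q[OF m_gt_1])

lemma integral_mod_qint2: "integral_mod (cyclo_q2 m) (qint2 j)"
  unfolding qint2_def
  by (intro integral_mod_divide integral_mod_diff integral_mod_1 integral_mod_var_q_powi[OF m_pos]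
      unit_mod_one_minus_var_q_squared[OF m_gt_1])

lemma cong_mod_summand:
  assumes "k \<le> n"
  shows "cong_mod (cyclo_q2 m) (summand d t k)
    (inverse ((1 - var_q ^ 2) * (1 - var_q) ^ 2) * antisym_part d t n k * poch_binomial d n k)"
proof -
  let ?p = "var_q ^ (2 * d)" and ?G = "poch_prod (var_q ^ (2 * d)) (var_q ^ (2 * d))"
  define A where "A = qint2 (2 * int d * int k + t) * qint (2 * int d * int k + t) ^ 2"
  define E where "E = var_q powi (- 4 * t * int k)"
  define M where "M = var_q powi (- (4 * int d * int k * (2 * int n + 1 - int k))) * (?G n / ?G (n - k))"
  have unit_G: "unit_mod (cyclo_q2 m) (?G j)" if "j \<le> n" for j
    using that n_less by (intro unit_mod_poch_prod_base[OF m_pos coprime_dm]) simp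
  have "cong_mod (cyclo_q2 m) (A * poch_prod ?p (var_q powi (2 * t)) k / ?G k * E) (A * M / ?G k * E)"
  proof (intro cong_mod_mult cong_mod_divide cong_mod_mult_left cong_mod_refl)
    show "cong_mod (cyclo_q2 m) (poch_prod ?p (var_q powi (2 * t)) k) M"
      unfolding M_def by (rule cong_mod_poch_prod_shifted[OF assms])
    show "integral_mod (cyclo_q2 m) A"
      unfolding A_def by (intro integral_mod_mult integral_mod_power integral_mod_qint integral_mod_qint2)
    show "integral_mod (cyclo_q2 m) (poch_prod ?p (var_q powi (2 * t)) k)"
      by (intro integral_mod_poch_prod integral_mod_var_q_powi[OF m_pos] integral_mod_var_q_power[OF m_pos])
    show "integral_mod (cyclo_q2 m) E"
      unfolding E_def by (rule integral_mod_var_q_powi[OF m_pos])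
    show "integral_mod (cyclo_q2 m) (A * M / ?G k)"
      unfolding M_def using assms
      by (intro integral_mod_divide integral_mod_mult \<open>integral_mod (cyclo_q2 m) A\<close>
          integral_mod_var_q_powi[OF m_pos] unit_mod_imp_integral_mod unit_G) simp_all
    show "unit_mod (cyclo_q2 m) (?G k)" using assms by (rule unit_G)
  qed
  moreover have "summand d t k = A * poch_prod ?p (var_q powi (2 * t)) k / ?G k * E"
    unfolding summand_eq_poch_prod A_def E_def ..
  moreover have "A * M / ?G k * E =
      inverse ((1 - var_q ^ 2) * (1 - var_q) ^ 2) * antisym_part d t n k * poch_binomial d n k"
  proof -
    have "var_q powi (- (4 * int d * int k * (2 * int n + 1 - int k))) * var_q powi (- 4 * t * int k) =
        var_q powi (- 4 * int k * (int d * (2 * int n + 1 - int k) + t))"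
      by (simp add: algebra_simps flip: power_int_add[OF disjI1[OF var_q_nonzero]])
    then show ?thesis
      unfolding A_def M_def E_def antisym_part_def poch_binomial_def qint2_def qint_def
      by (simp add: divide_inverse inverse_mult_distrib power2_eq_square ac_simps)
  qed
  ultimately show ?thesis by simp
qed

lemma cong_mod_antisym_part_reflect:
  assumes "k \<le> n"
  shows "cong_mod (cyclo_q2 m) (antisym_part d t n (n - k)) (- antisym_part d t n k)"
proof -
  define u where "u = 2 * int d * int k + t"
  define u' where "u' = 2 * int d * int (n - k) + t"
  define e where "e = - 4 * int k * (int d * (2 * int n + 1 - int k) + t)"
  define e' where "e' = - 4 * int (n - k) * (int d * (2 * int n + 1 - int (n - k)) + t)"
  have "u' + u = 2 * int m * s"
    using assms shift by (simp add: u_def u'_def of_nat_diff algebra_simps)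
  then have dvd_sum: "2 * int m dvd u' + u" by simp
  have cong_u: "cong_mod (cyclo_q2 m) (var_q powi u') (var_q powi (- u))"
    by (rule cong_mod_var_q_powi[OF m_pos]) (simp add: dvd_sum)
  have cong_2u: "cong_mod (cyclo_q2 m) (var_q powi (2 * u')) (var_q powi (- (2 * u)))"
    by (rule cong_mod_var_q_powi[OF m_pos]) (use dvd_mult[OF dvd_sum, of 2] in \<open>simp add: algebra_simps\<close>)
  txt \<open>After substituting \<open>t = m s - d n\<close> the terms in \<open>d\<close> cancel.\<close>
  have "e' - (e + 4 * u) = 2 * int m * (2 * s * (2 * int k - int n - 1))"
    using assms shift
    by (simp add: e_def e'_def u_def of_nat_diff algebra_simps flip: eq_diff_eq)
  then have cong_e: "cong_mod (cyclo_q2 m) (var_q powi e') (var_q powi (e + 4 * u))"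
    by (intro cong_mod_var_q_powi[OF m_pos]) simp
  have "antisym_part d t n (n - k) = (1 - var_q powi (2 * u')) * (1 - var_q powi u') ^ 2 * var_q powi e'"
    by (simp add: antisym_part_def u'_def e'_def)
  also have "cong_mod (cyclo_q2 m) \<dots>
      ((1 - var_q powi (- (2 * u))) * (1 - var_q powi (- u)) ^ 2 * var_q powi (e + 4 * u))"
    by (intro cong_mod_mult cong_mod_power cong_mod_diff cong_mod_refl cong_u cong_2u cong_e
        integral_mod_mult integral_mod_diff integral_mod_power integral_mod_1
        integral_mod_var_q_powi[OF m_pos])
  also have "(1 - var_q powi (- (2 * u))) * (1 - var_q powi (- u)) ^ 2 * var_q powi (e + 4 * u) =
      - antisym_part d t n k"
    unfolding antisym_part_def u_def e_def by (rule power_int_reflection_identity[OF var_q_nonzero])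
  finally show ?thesis .
qed

lemma integral_mod_antisym_part: "integral_mod (cyclo_q2 m) (antisym_part d t n k)"
  unfolding antisym_part_def
  by (intro integral_mod_mult integral_mod_diff integral_mod_power integral_mod_1
      integral_mod_var_q_powi[OF m_pos])

lemma zero_mod_summand_pair:
  assumes "k \<le> n"
  shows "zero_mod (cyclo_q2 m) (summand d t k + summand d t (n - k))"
proof -
  let ?C = "inverse ((1 - var_q ^ 2) * (1 - var_q) ^ 2)" and ?B = "poch_binomial d n k"
  have "unit_mod (cyclo_q2 m) ?C"
    by (intro unit_mod_inverse unit_mod_mult unit_mod_power unit_mod_one_minus_var_q[OF m_gt_1]
        unit_mod_one_minus_var_q_squared[OF m_gt_1])
  moreover have "unit_mod (cyclo_q2 m) ?B"
    unfolding poch_binomial_def using assms n_less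
    by (intro unit_mod_divide unit_mod_mult unit_mod_poch_prod_base[OF m_pos coprime_dm]) simp_all
  ultimately have "integral_mod (cyclo_q2 m) (?C * ?B)"
    by (intro integral_mod_mult unit_mod_imp_integral_mod)
  have "poch_binomial d n (n - k) = ?B"
    using assms by (simp add: poch_binomial_def ac_simps)
  then have "cong_mod (cyclo_q2 m) (summand d t (n - k)) (?C * ?B * antisym_part d t n (n - k))"
    using cong_mod_summand[of "n - k"] by (simp add: ac_simps)
  also have "cong_mod (cyclo_q2 m) \<dots> (?C * ?B * - antisym_part d t n k)"
    by (intro cong_mod_mult_left cong_mod_antisym_part_reflect assms integral_mod_antisym_part
        \<open>integral_mod (cyclo_q2 m) (?C * ?B)\<close>)
  finally have "cong_mod (cyclo_q2 m) (summand d t k + summand d t (n - k))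
      (?C * antisym_part d t n k * ?B + ?C * ?B * - antisym_part d t n k)"
    by (intro cong_mod_add cong_mod_summand assms)
  then show ?thesis unfolding cong_mod_def by (simp add: algebra_simps)
qed

lemma zero_mod_summand_beyond:
  assumes "n < k" and "k < m"
  shows "zero_mod (cyclo_q2 m) (summand d t k)"
proof -
  let ?p = "var_q ^ (2 * d)" and ?y = "var_q powi (2 * t)"
  have "zero_mod (cyclo_q2 m) (1 - ?y * ?p ^ n)"
  proof -
    have "?y * ?p ^ n = var_q powi (2 * t + 2 * int d * int n)"
      by (simp add: var_q_power_eq_powi power_int_add var_q_nonzero)
    also have "2 * t + 2 * int d * int n = 2 * int m * s"
      using shift by (simp add: algebra_simps flip: distrib_left)
    finally have "?y * ?p ^ n = var_q powi (2 * int m * s)" .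
    then have "- (var_q powi (2 * int m * s) - 1) = 1 - ?y * ?p ^ n" by simp
    moreover have "zero_mod (cyclo_q2 m) (- (var_q powi (2 * int m * s) - 1))"
      by (intro zero_mod_uminus zero_mod_var_q_powi_minus_one[OF m_pos]) simp
    ultimately show ?thesis by (simp only:)
  qed
  then have "zero_mod (cyclo_q2 m) (poch_factor (?y * ?p ^ n))"
    by (intro zero_mod_poch_factor integral_mod_shifted_base_power)
  moreover have "poch_prod ?p ?y k = poch_factor (?y * ?p ^ n) * (\<Prod>i\<in>{..<k} - {n}. poch_factor (?y * ?p ^ i))"
    unfolding poch_prod_def using assms(1) by (simp add: prod.remove)
  ultimately have "zero_mod (cyclo_q2 m) (poch_prod ?p ?y k)"
    by (simp add: zero_mod_mult integral_mod_prod integral_mod_poch_factor integral_mod_shifted_base_power)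
  then have "zero_mod (cyclo_q2 m) (poch_prod ?p ?y k * (qint2 (2 * int d * int k + t) *
      qint (2 * int d * int k + t) ^ 2 / poch_prod ?p ?p k * var_q powi (- 4 * t * int k)))"
    using assms(2)
    by (intro zero_mod_mult integral_mod_mult integral_mod_divide integral_mod_power integral_mod_qint
        integral_mod_qint2 integral_mod_var_q_powi[OF m_pos] unit_mod_poch_prod_base[OF m_pos coprime_dm])
  then show ?thesis by (simp add: summand_eq_poch_prod ac_simps times_divide_eq_left)
qed

lemma zero_mod_sum_summand: "zero_mod (cyclo_q2 m) (\<Sum>k<m. summand d t k)"
proof -
  have "zero_mod (cyclo_q2 m) (\<Sum>k\<le>n. summand d t k + summand d t (n - k))"
    by (intro zero_mod_sum zero_mod_summand_pair) simp
  moreover have "(\<Sum>k\<le>n. summand d t (n - k)) = (\<Sum>k\<le>n. summand d t k)"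
    using sum.nat_diff_reindex[of "summand d t" "Suc n"] by (simp add: lessThan_Suc_atMost)
  ultimately have "zero_mod (cyclo_q2 m) ((\<Sum>k\<le>n. summand d t k) * 2)"
    by (simp add: sum.distrib mult.commute[of _ 2])
  then have "zero_mod (cyclo_q2 m) (\<Sum>k\<le>n. summand d t k)"
    by (rule zero_mod_cancel[OF _ unit_mod_two])
  moreover have "zero_mod (cyclo_q2 m) (\<Sum>k\<in>{..<m} - {..n}. summand d t k)"
    by (intro zero_mod_sum zero_mod_summand_beyond) auto
  moreover have "{..n} \<subseteq> {..<m}" using n_less by auto
  ultimately show ?thesis by (simp add: sum.subset_diff[of "{..n}" "{..<m}"] zero_mod_add)
qed

end

lemma linear_congruence_solvable:
  fixes m d :: nat and t :: int
  assumes "m > 0" and "coprime d m"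
  shows "\<exists>n<m. int m dvd t + int d * int n"
proof -
  obtain u v where uv: "u * int d + v * int m = 1"
    using bezout_int[of "int d" "int m"] assms(2) by (auto simp: coprime_iff_gcd_eq_1)
  define r where "r = (- t * u) mod int m"
  have "0 \<le> r" "r < int m" using assms(1) by (simp_all add: r_def)
  moreover have "t + int d * r = int m * (t * v - int d * ((- t * u) div int m))"
  proof -
    have "r = - t * u - int m * ((- t * u) div int m)" by (simp add: r_def minus_mult_div_eq_mod)
    then show ?thesis using uv by algebra
  qed
  ultimately have "nat r < m" "int m dvd t + int d * int (nat r)" by simp_all
  then show ?thesis by blast
qed

theorem lemma3:
  fixes m d :: nat and t :: int
  assumes "m > 1" and "d \<ge> 2" and "coprime d m" and "coprime (int d) t"
  shows "cong0_mod
    (\<Sum>k<m. qint2 (2 * int d * int k + t) * (qint (2 * int d * int k + t))^2 *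
       (qpoch (var_q powi (2 * t)) (var_q ^ (2 * d)) k ^ 2 *
        qpoch (var_a * var_q powi (2 * t)) (var_q ^ (2 * d)) k *
        qpoch (var_q powi (2 * t) / var_a) (var_q ^ (2 * d)) k) /
       (qpoch (var_q ^ (2 * d)) (var_q ^ (2 * d)) k ^ 2 *
        qpoch (var_a * var_q ^ (2 * d)) (var_q ^ (2 * d)) k *
        qpoch (var_q ^ (2 * d) / var_a) (var_q ^ (2 * d)) k) *
       var_q powi (- 4 * t * int k))
    (cyclo_q2 m)"
proof -
  obtain n where "n < m" and "int m dvd t + int d * int n"
    using linear_congruence_solvable[of m d t] assms(1,3) by auto
  then obtain s where "t + int d * int n = int m * s" by blast
  with assms(1,3) \<open>n < m\<close> have "zero_mod (cyclo_q2 m) (\<Sum>k<m. summand d t k)"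
    by (rule zero_mod_sum_summand)
  then show ?thesis unfolding summand_def by (rule zero_mod_imp_cong0_mod)
qed

end
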